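(* Consider the networked $SIRS$-$V_o$ system without media actuator described in the context, with initial condition at time $t_0$ satisfying $o_i(t_0),s_i(t_0),x_i(t_0),r_i(t_0),v_i(t_0)\in[0,1]$ and $s_i(t_0)+x_i(t_0)+r_i(t_0)+v_i(t_0)=1$ for all $i$. If $o(t_0)\in[0,1]^n$, then $o_i(t)\in[0,1]$ for all $i\in[n]$ and all $t>t_0$.
   Context: There are $n$ nodes. All parameters are real and nonnegative: $a_{ij},\beta_{ij},\gamma_i,\omega_i,\delta_i,\eta^{\min}_{ij},\Delta\eta_{ij}$. Let $A=[a_{ij}]$, $B=[\beta_{ij}]$, $H_{\min}=[\eta^{\min}_{ij}]$, $\Delta H=[\Delta\eta_{ij}]$. For a square matrix $M$, $k_i[M]=\sum_j M_{ij}$, $\widetilde K[M]=\mathrm{diag}(k_i[M])$, $L[M]=\widetilde K[M]-M$. Let $\widetilde G=\mathrm{diag}(\gamma_i)$, $\widetilde W=\mathrm{diag}(\omega_i)$, $\widetilde D=\mathrm{diag}(\delta_i)$, $H(o)=\mathrm{diag}(o)\Delta H+H_{\min}$. State $(o,s,x,r,v)\in(\mathbb{R}^n)^5$, $\widetilde S=\mathrm{diag}(s)$, $\widetilde R=\mathrm{diag}(r)$, dynamics $\dot o=A(x-o)-2L[A]o$, $\dot s=\widetilde Dv-\widetilde S(Bx+H(o)v)+\widetilde Wr$, $\dot x=\widetilde SBx-\widetilde Gx$, $\dot r=\widetilde Gx-\widetilde Wr-\widetilde RH(o)v$, $\dot v=(\widetilde S+\widetilde R)H(o)v-\widetilde Dv$.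 *)

theory Defs
  imports "HOL-Analysis.Analysis"
begin

definition diagm :: "real ^ 'n \<Rightarrow> real ^ 'n ^ 'n" where
  "diagm d = (\<chi> i j. if i = j then d $ i else 0)"

definition kvec :: "real ^ 'n ^ 'n \<Rightarrow> real ^ 'n" where
  "kvec M = (\<chi> i. \<Sum>j\<in>UNIV. M $ i $ j)"

definition Ktil :: "real ^ 'n ^ 'n \<Rightarrow> real ^ 'n ^ 'n" where
  "Ktil M = diagm (kvec M)"

definition Lap :: "real ^ 'n ^ 'n \<Rightarrow> real ^ 'n ^ 'n" where
  "Lap M = Ktil M - M"

definition Hmat :: "real ^ 'n ^ 'n \<Rightarrow> real ^ 'n ^ 'n \<Rightarrow> real ^ 'n \<Rightarrow> real ^ 'n ^ 'n" where
  "Hmat Hmin DH o' = diagm o' ** DH + Hmin"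

definition f_o :: "real ^ 'n ^ 'n \<Rightarrow> real ^ 'n \<Rightarrow> real ^ 'n \<Rightarrow> real ^ 'n" where
  "f_o A o' x = A *v (x - o') - 2 *\<^sub>R (Lap A *v o')"

definition f_s where
  "f_s B \<delta> \<omega> Hmin DH o' s x r v =
     diagm \<delta> *v v - diagm s *v (B *v x + Hmat Hmin DH o' *v v) + diagm \<omega> *v r"

definition f_x where
  "f_x B \<gamma> s x = diagm s ** B *v x - diagm \<gamma> *v x"

definition f_r where
  "f_r \<gamma> \<omega> Hmin DH o' x r v =
     diagm \<gamma> *v x - diagm \<omega> *v r - diagm r ** Hmat Hmin DH o' *v v"

definition f_v where
  "f_v \<delta> Hmin DH o' s r v = (diagm s + diagm r) ** Hmat Hmin DH o' *v v - diagm \<delta> *v v"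

end

(*
  Invariance of o in [0, 1] cannot be proved for the opinion dynamics alone: at o_i = 1 the drift is
  bounded by sum_j a_ij (x_j - 1), so x_j <= 1 is needed, and this holds only because the epidemic
  part keeps s, x, r, v nonnegative while conserving s + x + r + v.  So all six constraints
  o_i >= 0, o_i <= 1, s_i, x_i, r_i, v_i >= 0 are treated together.  The vector field is
  quasi-positive for them: if the smallest slack equals -d with 0 < d <= 1, its derivative is at
  least -K d, with K depending only on the parameters.  A first-exit argument for the slacks
  perturbed by eta * exp ((|K| + 1) (t - T)) shows that they stay positive, and eta -> 0 gives
  nonnegativity.
*)
theory Submission
  imports Defs
begin

lemma has_real_derivative_vec_nth:
  fixes f :: "real \<Rightarrow> real ^ 'n"
  assumes "(f has_vector_derivative D) F"
  shows "((\<lambda>t. f t $ i) has_real_derivative D $ i) F"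
  using bounded_linear.has_vector_derivative[OF bounded_linear_vec_nth assms, of i]
  by (simp add: has_real_derivative_iff_has_vector_derivative)

lemma first_nonpositive_time:
  fixes g :: "'p \<Rightarrow> real \<Rightarrow> real"
  assumes "finite P"
    and cont: "\<And>q. q \<in> P \<Longrightarrow> continuous_on {t0..T} (g q)"
    and init: "\<And>q. q \<in> P \<Longrightarrow> 0 < g q t0"
    and "p \<in> P" "t \<in> {t0..T}" "g p t \<le> 0"
  shows "\<exists>t1\<in>{t0<..T}. \<exists>p1\<in>P. g p1 t1 = 0 \<and> (\<forall>q\<in>P. 0 \<le> g q t1) \<and>
           (\<forall>q\<in>P. \<forall>s\<in>{t0..<t1}. 0 < g q s)"
proof -
  define S where "S = {t \<in> {t0..T}. \<exists>p\<in>P. g p t \<le> 0}"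
  have "S \<noteq> {}"
    using assms(4-6) by (auto simp: S_def)
  moreover have "bdd_below S"
    by (auto simp: S_def intro: bdd_belowI[of _ t0])
  moreover have "closed S"
  proof -
    have "S = (\<Union>q\<in>P. {t \<in> {t0..T}. g q t \<le> 0})"
      by (auto simp: S_def)
    then show ?thesis
      using \<open>finite P\<close> cont
      by (simp only:)
        (intro closed_UN ballI continuous_on_closed_Collect_le continuous_on_const; simp)
  qed
  ultimately have "Inf S \<in> S"
    by (rule closed_contains_Inf)
  then obtain p1 where p1: "p1 \<in> P" "g p1 (Inf S) \<le> 0" and t1: "t0 \<le> Inf S" "Inf S \<le> T"
    by (auto simp: S_def)
  have before: "0 < g q s" if "q \<in> P" "s \<in> {t0..<Inf S}" for q s
  proof -
    have "s \<notin> S"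
      using that cInf_lower[OF _ \<open>bdd_below S\<close>, of s] by auto
    then show ?thesis
      using that t1 by (auto simp: S_def not_le)
  qed
  have "Inf S \<noteq> t0"
  proof
    assume "Inf S = t0"
    with p1 init[of p1] show False
      by simp
  qed
  with t1(1) have "t0 < Inf S"
    by linarith
  have nonneg: "0 \<le> g q (Inf S)" if "q \<in> P" for q
  proof -
    have "{t0..<Inf S} \<subseteq> {t \<in> {t0..T}. 0 \<le> g q t}"
      using before[OF that] t1 by (auto intro: less_imp_le)
    moreover have "closed {t \<in> {t0..T}. 0 \<le> g q t}"
      using cont[OF that] by (intro continuous_on_closed_Collect_le continuous_on_const) auto
    ultimately have "closure {t0..<Inf S} \<subseteq> {t \<in> {t0..T}. 0 \<le> g q t}"
      by (rule closure_minimal)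
    moreover have "Inf S \<in> closure {t0..<Inf S}"
      using \<open>t0 < Inf S\<close> by simp
    ultimately show ?thesis
      by blast
  qed
  with p1 have "g p1 (Inf S) = 0"
    by fastforce
  moreover have "Inf S \<in> {t0<..T}"
    using \<open>t0 < Inf S\<close> t1(2) by simp
  moreover have "\<forall>q\<in>P. \<forall>s\<in>{t0..<Inf S}. 0 < g q s"
    using before by blast
  ultimately show ?thesis
    using p1(1) nonneg by blast
qed

lemma positive_invariant_first_exit:
  fixes g g' :: "'p \<Rightarrow> real \<Rightarrow> real"
  assumes "finite P"
    and deriv: "\<And>p t. p \<in> P \<Longrightarrow> t \<in> {t0..T} \<Longrightarrow>
                  (g p has_real_derivative g' p t) (at t within {t0..T})"
    and init: "\<And>p. p \<in> P \<Longrightarrow> 0 < g p t0"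
    and exit: "\<And>p t. p \<in> P \<Longrightarrow> t \<in> {t0<..T} \<Longrightarrow> \<forall>q\<in>P. 0 \<le> g q t \<Longrightarrow> g p t = 0 \<Longrightarrow>
                  0 < g' p t"
    and "p \<in> P" "t \<in> {t0..T}"
  shows "0 < g p t"
proof (rule ccontr)
  assume "\<not> 0 < g p t"
  have cont: "continuous_on {t0..T} (g q)" if "q \<in> P" for q
    using deriv[OF that] by (rule DERIV_continuous_on)
  have "g p t \<le> 0"
    using \<open>\<not> 0 < g p t\<close> by simp
  from first_nonpositive_time[of P t0 T g p t, OF \<open>finite P\<close> cont init \<open>p \<in> P\<close> \<open>t \<in> {t0..T}\<close>
      \<open>g p t \<le> 0\<close>]
  obtain t1 p1 where t1: "t0 < t1" "t1 \<le> T" and p1: "p1 \<in> P" "g p1 t1 = 0"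
    and nonneg: "\<forall>q\<in>P. 0 \<le> g q t1" and before: "\<forall>q\<in>P. \<forall>s\<in>{t0..<t1}. 0 < g q s"
    by auto
  have "t1 \<in> {t0..T}"
    using t1 by simp
  have "0 < g' p1 t1"
    using exit[OF p1(1) _ nonneg p1(2)] t1 by simp
  from has_real_derivative_pos_inc_left[OF deriv[OF p1(1) \<open>t1 \<in> {t0..T}\<close>] this]
  obtain e where "0 < e" and dec: "\<forall>h>0. t1 - h \<in> {t0..T} \<longrightarrow> h < e \<longrightarrow> g p1 (t1 - h) < g p1 t1"
    by blast
  define h where "h = min (e / 2) (t1 - t0)"
  have "g p1 (t1 - h) < 0"
    using dec \<open>0 < e\<close> t1 p1(2) by (auto simp: h_def)
  moreover have "0 < g p1 (t1 - h)"
    using before p1(1) \<open>0 < e\<close> t1 by (auto simp: h_def)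
  ultimately show False
    by simp
qed

lemma nonneg_invariant_quasi_positive:
  fixes g g' :: "'p \<Rightarrow> real \<Rightarrow> real" and K :: real
  assumes "finite P"
    and deriv: "\<And>p t. p \<in> P \<Longrightarrow> t \<in> {t0..T} \<Longrightarrow>
                  (g p has_real_derivative g' p t) (at t within {t0..T})"
    and init: "\<And>p. p \<in> P \<Longrightarrow> 0 \<le> g p t0"
    and quasi_pos: "\<And>p t. p \<in> P \<Longrightarrow> t \<in> {t0<..T} \<Longrightarrow> -1 \<le> g p t \<Longrightarrow> g p t < 0 \<Longrightarrow>
                  \<forall>q\<in>P. g p t \<le> g q t \<Longrightarrow> K * g p t \<le> g' p t"
    and "p \<in> P" "t \<in> {t0..T}"
  shows "0 \<le> g p t"
proof (rule ccontr)
  assume "\<not> 0 \<le> g p t"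
  \<comment> \<open>Since L > K, at a first zero of a perturbed slack the perturbation grows faster than
    quasi-positivity lets the slack decrease; this is the exit hypothesis of
    positive_invariant_first_exit.\<close>
  define L where "L = \<bar>K\<bar> + 1"
  define \<eta> where "\<eta> = min 1 (- g p t / 2)"
  have "0 < \<eta>" "\<eta> \<le> 1"
    using \<open>\<not> 0 \<le> g p t\<close> by (auto simp: \<eta>_def)
  let ?h = "\<lambda>t. \<eta> * exp (L * (t - T))"
  have h_le: "?h t \<le> \<eta>" if "t \<le> T" for t
    using that \<open>0 < \<eta>\<close> by (simp add: L_def mult_nonneg_nonpos)
  have "0 < g p t + ?h t"
  proof (rule positive_invariant_first_exit
      [where g = "\<lambda>p t. g p t + ?h t" and g' = "\<lambda>p t. g' p t + L * ?h t"])
    show "((\<lambda>t. g q t + ?h t) has_real_derivative g' q t + L * ?h t) (at t within {t0..T})"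
      if "q \<in> P" "t \<in> {t0..T}" for q t
      using deriv[OF that] by (auto intro!: derivative_eq_intros)
    show "0 < g q t0 + ?h t0" if "q \<in> P" for q
      using init[OF that] \<open>0 < \<eta>\<close> by (simp add: add_nonneg_pos)
    show "0 < g' q s + L * ?h s"
      if "q \<in> P" "s \<in> {t0<..T}" "\<forall>q'\<in>P. 0 \<le> g q' s + ?h s" "g q s + ?h s = 0" for q s
    proof -
      have "0 < ?h s" "?h s \<le> \<eta>"
        using \<open>0 < \<eta>\<close> h_le[of s] that(2) by auto
      then have "K * g q s \<le> g' q s"
        using that \<open>\<eta> \<le> 1\<close> by (intro quasi_pos) force+
      moreover have "g q s = - ?h s"
        using that(4) by linarith
      moreover have "K * ?h s \<le> \<bar>K\<bar> * ?h s"
        using \<open>0 < ?h s\<close> by (intro mult_right_mono) auto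
      ultimately show ?thesis
        using \<open>0 < ?h s\<close> unfolding L_def by (simp add: distrib_right)
    qed
  qed (use assms in auto)
  moreover have "?h t \<le> - g p t / 2"
    using h_le[of t] \<open>t \<in> {t0..T}\<close> by (auto simp: \<eta>_def)
  ultimately show False
    using \<open>\<not> 0 \<le> g p t\<close> by argo
qed

lemma sum_mult_ge:
  fixes a w :: "'i \<Rightarrow> real"
  assumes "\<And>j. 0 \<le> a j" "\<And>j. l \<le> w j"
  shows "sum a J * l \<le> (\<Sum>j\<in>J. a j * w j)"
  unfolding sum_distrib_right using assms by (intro sum_mono mult_left_mono)

lemma sum_mult_le:
  fixes a w :: "'i \<Rightarrow> real"
  assumes "\<And>j. 0 \<le> a j" "\<And>j. w j \<le> u"
  shows "(\<Sum>j\<in>J. a j * w j) \<le> sum a J * u"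
  unfolding sum_distrib_right using assms by (intro sum_mono mult_left_mono)

lemma mult_ge_neg_bound:
  fixes p q m y :: real
  assumes "0 \<le> p" "p \<le> q" "- m \<le> y" "0 \<le> m"
  shows "- (q * m) \<le> p * y"
proof -
  have "p * (- m) \<le> p * y" "p * m \<le> q * m"
    using assms mult_left_mono[of "- m" y p] mult_right_mono[of p q m] by auto
  then show ?thesis
    by simp
qed

lemma mult_bounds_almost_nonneg:
  fixes a b \<alpha> \<beta> a' b' :: real
  assumes "- \<alpha> \<le> a" "a \<le> a'" "- \<beta> \<le> b" "b \<le> b'" "0 \<le> \<alpha>" "\<alpha> \<le> a'" "0 \<le> \<beta>" "\<beta> \<le> b'"
  shows "- (a' * \<beta> + \<alpha> * b') \<le> a * b" "a * b \<le> a' * b'"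
proof -
  have "\<bar>a\<bar> \<le> a'" "\<bar>b\<bar> \<le> b'"
    using assms by linarith+
  then have "\<bar>a * b\<bar> \<le> a' * b'"
    unfolding abs_mult by (intro mult_mono) auto
  then show "a * b \<le> a' * b'"
    by linarith
  show "- (a' * \<beta> + \<alpha> * b') \<le> a * b"
  proof (cases "0 \<le> a"; cases "0 \<le> b")
    assume "0 \<le> a" "\<not> 0 \<le> b"
    then have "a * (- \<beta>) \<le> a * b" "a * \<beta> \<le> a' * \<beta>"
      using assms mult_left_mono[of "- \<beta>" b a] mult_right_mono[of a a' \<beta>] by auto
    moreover have "0 \<le> \<alpha> * b'"
      using assms by simp
    ultimately show ?thesis
      by linarith
  next
    assume "\<not> 0 \<le> a" "0 \<le> b"
    then have "(- \<alpha>) * b \<le> a * b" "\<alpha> * b \<le> \<alpha> * b'"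
      using assms mult_right_mono[of "- \<alpha>" a b] mult_left_mono[of b b' \<alpha>] by auto
    moreover have "0 \<le> a' * \<beta>"
      using assms by simp
    ultimately show ?thesis
      by linarith
  qed (use assms in \<open>auto intro!: add_nonneg_nonneg mult_nonpos_nonpos
                     order_trans[OF _ zero_le_mult_iff[THEN iffD2]]\<close>)
qed

lemma diagm_mult_nth: "(diagm d *v w) $ i = d $ i * w $ i"
proof -
  have "(diagm d *v w) $ i = (\<Sum>j\<in>UNIV. if i = j then d $ i * w $ j else 0)"
    unfolding diagm_def matrix_vector_mult_def by (simp only: vec_lambda_beta, rule sum.cong) auto
  then show ?thesis
    by simp
qed

lemma diagm_matrix_mult_nth: "(diagm d ** M *v w) $ i = d $ i * (M *v w) $ i"
  by (simp add: matrix_vector_mul_assoc[symmetric] diagm_mult_nth)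

lemma diagm_add: "diagm a + diagm b = diagm (a + b)"
  by (simp add: diagm_def vec_eq_iff)

lemma Hmat_mult_nth: "(Hmat Hmin DH o' *v v) $ i = o' $ i * (DH *v v) $ i + (Hmin *v v) $ i"
  by (simp add: Hmat_def matrix_vector_mult_add_rdistrib diagm_matrix_mult_nth)

lemma matrix_vector_mult_nth_bounds:
  fixes M :: "real ^ 'n ^ 'n"
  assumes "\<forall>i j. 0 \<le> M $ i $ j" "kvec M $ i \<le> c" "0 \<le> d" "0 \<le> u"
    and "\<forall>j. - d \<le> w $ j \<and> w $ j \<le> u"
  shows "- (c * d) \<le> (M *v w) $ i" "(M *v w) $ i \<le> c * u"
proof -
  have "kvec M $ i * (- d) \<le> (M *v w) $ i"
    using sum_mult_ge[of "\<lambda>j. M $ i $ j" "- d" "\<lambda>j. w $ j" UNIV] assms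
    by (simp add: kvec_def matrix_vector_mult_def)
  moreover have "(M *v w) $ i \<le> kvec M $ i * u"
    using sum_mult_le[of "\<lambda>j. M $ i $ j" "\<lambda>j. w $ j" u UNIV] assms
    by (simp add: kvec_def matrix_vector_mult_def)
  moreover have "kvec M $ i * d \<le> c * d" "kvec M $ i * u \<le> c * u"
    using assms by (auto intro: mult_right_mono)
  ultimately show "- (c * d) \<le> (M *v w) $ i" "(M *v w) $ i \<le> c * u"
    by linarith+
qed

lemma f_o_nth:
  "f_o A o' x $ i =
     (\<Sum>j\<in>UNIV. A $ i $ j * (x $ j - o' $ i)) + (\<Sum>j\<in>UNIV. A $ i $ j * (o' $ j - o' $ i))"
proof -
  have "f_o A o' x $ i = (A *v x) $ i + (A *v o') $ i - 2 * (kvec A $ i * o' $ i)"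
    by (simp add: f_o_def Lap_def Ktil_def matrix_vector_mult_diff_rdistrib
        matrix_vector_mult_diff_distrib diagm_mult_nth)
  then show ?thesis
    by (simp add: kvec_def matrix_vector_mult_def right_diff_distrib sum_subtractf
        sum_distrib_right)
qed

lemma f_s_nth: "f_s B \<delta> \<omega> Hmin DH o' s x r v $ i =
   \<delta> $ i * v $ i - s $ i * ((B *v x) $ i + (Hmat Hmin DH o' *v v) $ i) + \<omega> $ i * r $ i"
  by (simp add: f_s_def diagm_mult_nth)

lemma f_x_nth: "f_x B \<gamma> s x $ i = s $ i * (B *v x) $ i - \<gamma> $ i * x $ i"
  by (simp add: f_x_def diagm_mult_nth diagm_matrix_mult_nth)

lemma f_r_nth: "f_r \<gamma> \<omega> Hmin DH o' x r v $ i =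
   \<gamma> $ i * x $ i - \<omega> $ i * r $ i - r $ i * (Hmat Hmin DH o' *v v) $ i"
  by (simp add: f_r_def diagm_mult_nth diagm_matrix_mult_nth)

lemma f_v_nth: "f_v \<delta> Hmin DH o' s r v $ i =
   (s $ i + r $ i) * (Hmat Hmin DH o' *v v) $ i - \<delta> $ i * v $ i"
  by (simp add: f_v_def diagm_mult_nth diagm_matrix_mult_nth diagm_add)

lemma f_s_f_x_f_r_f_v_sum:
  "f_s B \<delta> \<omega> Hmin DH o' s x r v + f_x B \<gamma> s x + f_r \<gamma> \<omega> Hmin DH o' x r v
     + f_v \<delta> Hmin DH o' s r v = 0"
  by (simp add: vec_eq_iff f_s_nth f_x_nth f_r_nth f_v_nth algebra_simps)

lemma f_o_nth_nonneg_at_min: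
  assumes "\<forall>i j. 0 \<le> A $ i $ j" "\<forall>j. o' $ i \<le> o' $ j \<and> o' $ i \<le> x $ j"
  shows "0 \<le> f_o A o' x $ i"
  unfolding f_o_nth using assms by (intro add_nonneg_nonneg sum_nonneg mult_nonneg_nonneg) auto

lemma f_o_nth_le_at_max:
  assumes "\<forall>i j. 0 \<le> A $ i $ j" "\<forall>j. o' $ j \<le> o' $ i \<and> x $ j \<le> o' $ i + e"
  shows "f_o A o' x $ i \<le> kvec A $ i * e"
proof -
  have "(\<Sum>j\<in>UNIV. A $ i $ j * (x $ j - o' $ i)) \<le> kvec A $ i * e"
    unfolding kvec_def vec_lambda_beta using assms by (intro sum_mult_le) (auto simp: algebra_simps)
  moreover have "(\<Sum>j\<in>UNIV. A $ i $ j * (o' $ j - o' $ i)) \<le> 0"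
    using assms by (intro sum_nonpos mult_nonneg_nonpos) auto
  ultimately show ?thesis
    unfolding f_o_nth by linarith
qed

text \<open>slack k i is affine in the state with linear part slack_deriv k i, so slack_deriv applied
  to the vector field is the derivative of the slack along a trajectory.\<close>

datatype constraint = ONonneg | OLeOne | SNonneg | XNonneg | RNonneg | VNonneg

instance constraint :: finite
proof
  have "(UNIV :: constraint set) = {ONonneg, OLeOne, SNonneg, XNonneg, RNonneg, VNonneg}"
    by (auto intro: constraint.exhaust)
  then show "finite (UNIV :: constraint set)"
    by (metis finite.emptyI finite_insert)
qed

fun slack :: "constraint \<Rightarrow> 'n \<Rightarrow> real ^ 'n \<Rightarrow> real ^ 'n \<Rightarrow> real ^ 'n \<Rightarrow> real ^ 'n \<Rightarrow> real ^ 'n \<Rightarrow> real"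
  where
    "slack ONonneg i o' s x r v = o' $ i"
  | "slack OLeOne i o' s x r v = 1 - o' $ i"
  | "slack SNonneg i o' s x r v = s $ i"
  | "slack XNonneg i o' s x r v = x $ i"
  | "slack RNonneg i o' s x r v = r $ i"
  | "slack VNonneg i o' s x r v = v $ i"

fun slack_deriv ::
  "constraint \<Rightarrow> 'n \<Rightarrow> real ^ 'n \<Rightarrow> real ^ 'n \<Rightarrow> real ^ 'n \<Rightarrow> real ^ 'n \<Rightarrow> real ^ 'n \<Rightarrow> real"
  where
    "slack_deriv ONonneg i o' s x r v = o' $ i"
  | "slack_deriv OLeOne i o' s x r v = - o' $ i"
  | "slack_deriv SNonneg i o' s x r v = s $ i"
  | "slack_deriv XNonneg i o' s x r v = x $ i"
  | "slack_deriv RNonneg i o' s x r v = r $ i"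
  | "slack_deriv VNonneg i o' s x r v = v $ i"

lemma has_real_derivative_slack:
  assumes "(o' has_vector_derivative dO) F" "(s has_vector_derivative dS) F"
    "(x has_vector_derivative dX) F" "(r has_vector_derivative dR) F"
    "(v has_vector_derivative dV) F"
  shows "((\<lambda>t. slack k i (o' t) (s t) (x t) (r t) (v t)) has_real_derivative
           slack_deriv k i dO dS dX dR dV) F"
  by (cases k) (auto intro!: derivative_eq_intros has_real_derivative_vec_nth assms)

definition near_feasible ::
  "real \<Rightarrow> real ^ 'n \<Rightarrow> real ^ 'n \<Rightarrow> real ^ 'n \<Rightarrow> real ^ 'n \<Rightarrow> real ^ 'n \<Rightarrow> bool"
  where "near_feasible d o' s x r v \<longleftrightarrow>
           (\<forall>k i. - d \<le> slack k i o' s x r v) \<and> (\<forall>i. s $ i + x $ i + r $ i + v $ i = 1)"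

lemma near_feasibleD:
  assumes "near_feasible d o' s x r v" "d \<le> 1"
  shows "- d \<le> o' $ i" "o' $ i \<le> 1 + d" "- d \<le> s $ i" "- d \<le> x $ i" "- d \<le> r $ i" "- d \<le> v $ i"
    and "o' $ i \<le> 2" "x $ i \<le> 1 + 3 * d" "s $ i \<le> 4" "x $ i \<le> 4" "v $ i \<le> 4"
    and "- (2 * d) \<le> s $ i + r $ i" "s $ i + r $ i \<le> 3"
proof -
  have lo: "- d \<le> slack k i o' s x r v" for k
    using assms(1) unfolding near_feasible_def by blast
  have "s $ i + x $ i + r $ i + v $ i = 1"
    using assms(1) unfolding near_feasible_def by blast
  with lo[of ONonneg] lo[of OLeOne] lo[of SNonneg] lo[of XNonneg] lo[of RNonneg] lo[of VNonneg]
  show "- d \<le> o' $ i" "o' $ i \<le> 1 + d" "- d \<le> s $ i" "- d \<le> x $ i" "- d \<le> r $ i" "- d \<le> v $ i"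
    and "o' $ i \<le> 2" "x $ i \<le> 1 + 3 * d" "s $ i \<le> 4" "x $ i \<le> 4" "v $ i \<le> 4"
    and "- (2 * d) \<le> s $ i + r $ i" "s $ i + r $ i \<le> 3"
    using assms(2) by simp_all
qed

locale sirs_param_bound =
  fixes A B Hmin DH :: "real ^ 'n ^ 'n" and \<gamma> \<omega> \<delta> :: "real ^ 'n" and c :: real
  assumes nonneg_A: "0 \<le> A $ i $ j" and nonneg_B: "0 \<le> B $ i $ j"
    and nonneg_Hmin: "0 \<le> Hmin $ i $ j" and nonneg_DH: "0 \<le> DH $ i $ j"
    and nonneg_gamma: "0 \<le> \<gamma> $ i" and nonneg_omega: "0 \<le> \<omega> $ i" and nonneg_delta: "0 \<le> \<delta> $ i"
    and kvec_A_le: "kvec A $ i \<le> c" and kvec_B_le: "kvec B $ i \<le> c"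
    and kvec_Hmin_le: "kvec Hmin $ i \<le> c" and kvec_DH_le: "kvec DH $ i \<le> c"
    and gamma_le: "\<gamma> $ i \<le> c" and omega_le: "\<omega> $ i \<le> c" and delta_le: "\<delta> $ i \<le> c"
begin

lemma bound_nonneg: "0 \<le> c"
  using nonneg_gamma gamma_le by (rule order_trans)

lemma B_mult_nth_bounds:
  assumes "near_feasible d o' s x r v" "0 < d" "d \<le> 1"
  shows "- (c * d) \<le> (B *v x) $ i" "(B *v x) $ i \<le> c * 4"
proof -
  have "\<forall>j. - d \<le> x $ j \<and> x $ j \<le> 4"
    using near_feasibleD[OF assms(1,3)] by blast
  then show "- (c * d) \<le> (B *v x) $ i" "(B *v x) $ i \<le> c * 4"
    using matrix_vector_mult_nth_bounds[of B i c d 4 x] nonneg_B kvec_B_le assms(2) by auto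
qed

lemma Hmat_mult_nth_bounds:
  assumes "near_feasible d o' s x r v" "0 < d" "d \<le> 1"
  shows "- (7 * c * d) \<le> (Hmat Hmin DH o' *v v) $ i" "(Hmat Hmin DH o' *v v) $ i \<le> 12 * c"
proof -
  note feas = near_feasibleD[OF assms(1,3)]
  have "\<forall>j. - d \<le> v $ j \<and> v $ j \<le> 4"
    using feas by blast
  then have DHv: "- (c * d) \<le> (DH *v v) $ i" "(DH *v v) $ i \<le> c * 4"
    and Hminv: "- (c * d) \<le> (Hmin *v v) $ i" "(Hmin *v v) $ i \<le> c * 4"
    using matrix_vector_mult_nth_bounds[of DH i c d 4 v]
      matrix_vector_mult_nth_bounds[of Hmin i c d 4 v]
      nonneg_DH kvec_DH_le nonneg_Hmin kvec_Hmin_le assms(2) by auto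
  have "c * d \<le> c * 4"
    using bound_nonneg assms(3) by (intro mult_left_mono) auto
  then have "- (2 * (c * d) + d * (c * 4)) \<le> o' $ i * (DH *v v) $ i"
    and "o' $ i * (DH *v v) $ i \<le> 2 * (c * 4)"
    using mult_bounds_almost_nonneg[of d "o' $ i" 2 "c * d" "(DH *v v) $ i" "c * 4"]
      feas DHv assms(2,3) bound_nonneg by auto
  then show "- (7 * c * d) \<le> (Hmat Hmin DH o' *v v) $ i" "(Hmat Hmin DH o' *v v) $ i \<le> 12 * c"
    using Hminv unfolding Hmat_mult_nth by (simp_all add: algebra_simps)
qed

lemma f_s_nth_ge:
  assumes "near_feasible d o' s x r v" "0 < d" "d \<le> 1" "s $ i = - d"
  shows "- (10 * c * d) \<le> f_s B \<delta> \<omega> Hmin DH o' s x r v $ i"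
proof -
  note feas = near_feasibleD[OF assms(1,3)]
  have "- (c * d) \<le> \<delta> $ i * v $ i" "- (c * d) \<le> \<omega> $ i * r $ i"
    using mult_ge_neg_bound[of "\<delta> $ i" c d "v $ i"] mult_ge_neg_bound[of "\<omega> $ i" c d "r $ i"]
      feas assms(2) nonneg_delta delta_le nonneg_omega omega_le by auto
  moreover have "- (1 * (c * d)) \<le> d * (B *v x) $ i"
    and "- (1 * (7 * c * d)) \<le> d * (Hmat Hmin DH o' *v v) $ i"
    using mult_ge_neg_bound[of d 1 "c * d" "(B *v x) $ i"]
      mult_ge_neg_bound[of d 1 "7 * c * d" "(Hmat Hmin DH o' *v v) $ i"]
      B_mult_nth_bounds[OF assms(1-3)] Hmat_mult_nth_bounds[OF assms(1-3)] assms(2,3) bound_nonneg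
    by auto
  ultimately show ?thesis
    using assms(4) unfolding f_s_nth by (simp add: algebra_simps)
qed

lemma f_x_nth_ge:
  assumes "near_feasible d o' s x r v" "0 < d" "d \<le> 1" "x $ i = - d"
  shows "- (8 * c * d) \<le> f_x B \<gamma> s x $ i"
proof -
  note feas = near_feasibleD[OF assms(1,3)]
  have "c * d \<le> c * 4"
    using bound_nonneg assms(3) by (intro mult_left_mono) auto
  then have "- (4 * (c * d) + d * (c * 4)) \<le> s $ i * (B *v x) $ i"
    using mult_bounds_almost_nonneg[of d "s $ i" 4 "c * d" "(B *v x) $ i" "c * 4"]
      feas B_mult_nth_bounds[OF assms(1-3)] assms(2,3) bound_nonneg by auto
  moreover have "0 \<le> \<gamma> $ i * d"
    using nonneg_gamma assms(2) by simp
  ultimately show ?thesis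
    using assms(4) unfolding f_x_nth by (simp add: algebra_simps)
qed

lemma f_r_nth_ge:
  assumes "near_feasible d o' s x r v" "0 < d" "d \<le> 1" "r $ i = - d"
  shows "- (8 * c * d) \<le> f_r \<gamma> \<omega> Hmin DH o' x r v $ i"
proof -
  note feas = near_feasibleD[OF assms(1,3)]
  have "- (c * d) \<le> \<gamma> $ i * x $ i"
    using mult_ge_neg_bound[of "\<gamma> $ i" c d "x $ i"] feas assms(2) nonneg_gamma gamma_le by auto
  moreover have "- (1 * (7 * c * d)) \<le> d * (Hmat Hmin DH o' *v v) $ i"
    using mult_ge_neg_bound[of d 1 "7 * c * d" "(Hmat Hmin DH o' *v v) $ i"]
      Hmat_mult_nth_bounds[OF assms(1-3)] assms(2,3) bound_nonneg by auto
  moreover have "0 \<le> \<omega> $ i * d"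
    using nonneg_omega assms(2) by simp
  ultimately show ?thesis
    using assms(4) unfolding f_r_nth by (simp add: algebra_simps)
qed

lemma f_v_nth_ge:
  assumes "near_feasible d o' s x r v" "0 < d" "d \<le> 1" "v $ i = - d"
  shows "- (45 * c * d) \<le> f_v \<delta> Hmin DH o' s r v $ i"
proof -
  note feas = near_feasibleD[OF assms(1,3)]
  have "c * d \<le> c"
    using bound_nonneg assms(3) by (simp add: mult_left_le)
  then have "- (3 * (7 * c * d) + 2 * d * (12 * c)) \<le> (s $ i + r $ i) * (Hmat Hmin DH o' *v v) $ i"
    using mult_bounds_almost_nonneg
        [of "2 * d" "s $ i + r $ i" 3 "7 * c * d" "(Hmat Hmin DH o' *v v) $ i" "12 * c"]
      feas Hmat_mult_nth_bounds[OF assms(1-3)] assms(2,3) bound_nonneg by auto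
  moreover have "0 \<le> \<delta> $ i * d"
    using nonneg_delta assms(2) by simp
  ultimately show ?thesis
    using assms(4) unfolding f_v_nth by (simp add: algebra_simps)
qed

text \<open>45 is the largest of the constants in the four lemmas above (attained for v); the two
  opinion constraints only need 2.\<close>

lemma slack_deriv_quasi_positive:
  assumes "\<forall>k' j. slack k i o' s x r v \<le> slack k' j o' s x r v"
    and "- 1 \<le> slack k i o' s x r v" "slack k i o' s x r v < 0"
    and "\<forall>j. s $ j + x $ j + r $ j + v $ j = 1"
  shows "45 * c * slack k i o' s x r v \<le> slack_deriv k i (f_o A o' x) (f_s B \<delta> \<omega> Hmin DH o' s x r v)
           (f_x B \<gamma> s x) (f_r \<gamma> \<omega> Hmin DH o' x r v) (f_v \<delta> Hmin DH o' s r v)"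
proof -
  define d where "d = - slack k i o' s x r v"
  have d: "0 < d" "d \<le> 1"
    using assms(2,3) by (auto simp: d_def)
  have feas: "near_feasible d o' s x r v"
    using assms(1,4) by (auto simp: near_feasible_def d_def)
  note bounds = near_feasibleD[OF feas d(2)]
  have "0 \<le> c * d"
    using bound_nonneg d by simp
  moreover have "- (45 * c * d) \<le> slack_deriv k i (f_o A o' x) (f_s B \<delta> \<omega> Hmin DH o' s x r v)
           (f_x B \<gamma> s x) (f_r \<gamma> \<omega> Hmin DH o' x r v) (f_v \<delta> Hmin DH o' s r v)"
  proof (cases k)
    case ONonneg
    then have "0 \<le> f_o A o' x $ i"
      using bounds d_def by (intro f_o_nth_nonneg_at_min) (auto simp: nonneg_A)
    then show ?thesis
      using ONonneg \<open>0 \<le> c * d\<close> by simp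
  next
    case OLeOne
    then have "f_o A o' x $ i \<le> kvec A $ i * (2 * d)"
      using bounds d_def by (intro f_o_nth_le_at_max) (auto simp: nonneg_A)
    moreover have "kvec A $ i * (2 * d) \<le> c * (2 * d)"
      using d kvec_A_le by (intro mult_right_mono) auto
    ultimately show ?thesis
      using OLeOne \<open>0 \<le> c * d\<close> by simp
  qed (use f_s_nth_ge f_x_nth_ge f_r_nth_ge f_v_nth_ge feas d \<open>0 \<le> c * d\<close> in
         \<open>fastforce simp: d_def\<close>)+
  ultimately show ?thesis
    by (simp add: d_def)
qed

end

lemma sirs_param_bound_exists:
  fixes A B Hmin DH :: "real ^ 'n ^ 'n" and \<gamma> \<omega> \<delta> :: "real ^ 'n"
  assumes "\<forall>i j. 0 \<le> A $ i $ j" "\<forall>i j. 0 \<le> B $ i $ j" "\<forall>i j. 0 \<le> Hmin $ i $ j"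
    "\<forall>i j. 0 \<le> DH $ i $ j" "\<forall>i. 0 \<le> \<gamma> $ i" "\<forall>i. 0 \<le> \<omega> $ i" "\<forall>i. 0 \<le> \<delta> $ i"
  shows "\<exists>c. sirs_param_bound A B Hmin DH \<gamma> \<omega> \<delta> c"
proof -
  define m where "m i = max (kvec A $ i) (max (kvec B $ i) (max (kvec Hmin $ i) (max (kvec DH $ i)
                   (max (\<gamma> $ i) (max (\<omega> $ i) (\<delta> $ i))))))" for i
  define M where "M = Max (range m)"
  have "m i \<le> M" for i
    by (simp add: M_def)
  moreover have "kvec A $ i \<le> m i \<and> kvec B $ i \<le> m i \<and> kvec Hmin $ i \<le> m i \<and> kvec DH $ i \<le> m i
      \<and> \<gamma> $ i \<le> m i \<and> \<omega> $ i \<le> m i \<and> \<delta> $ i \<le> m i" for i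
    by (simp add: m_def le_max_iff_disj)
  ultimately have "kvec A $ i \<le> M \<and> kvec B $ i \<le> M \<and> kvec Hmin $ i \<le> M \<and> kvec DH $ i \<le> M
      \<and> \<gamma> $ i \<le> M \<and> \<omega> $ i \<le> M \<and> \<delta> $ i \<le> M" for i
    by (meson order_trans)
  then show ?thesis
    using assms by (intro exI[of _ M] sirs_param_bound.intro) auto
qed

lemma sirv_total_conserved:
  assumes "\<forall>t\<ge>t0. (s has_vector_derivative
               f_s B \<delta> \<omega> Hmin DH (o' t) (s t) (x t) (r t) (v t)) (at t within {t0..})"
    and "\<forall>t\<ge>t0. (x has_vector_derivative f_x B \<gamma> (s t) (x t)) (at t within {t0..})"
    and "\<forall>t\<ge>t0. (r has_vector_derivative
               f_r \<gamma> \<omega> Hmin DH (o' t) (x t) (r t) (v t)) (at t within {t0..})"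
    and "\<forall>t\<ge>t0. (v has_vector_derivative
               f_v \<delta> Hmin DH (o' t) (s t) (r t) (v t)) (at t within {t0..})"
    and "t0 \<le> t"
  shows "s t + x t + r t + v t = s t0 + x t0 + r t0 + v t0"
proof -
  have "((\<lambda>t. s t + x t + r t + v t) has_vector_derivative
      f_s B \<delta> \<omega> Hmin DH (o' t) (s t) (x t) (r t) (v t) + f_x B \<gamma> (s t) (x t)
      + f_r \<gamma> \<omega> Hmin DH (o' t) (x t) (r t) (v t) + f_v \<delta> Hmin DH (o' t) (s t) (r t) (v t))
      (at t within {t0..})" if "t \<in> {t0..}" for t
    using assms(1-4) that by (intro has_vector_derivative_add) auto
  then have "((\<lambda>t. s t + x t + r t + v t) has_vector_derivative 0) (at t within {t0..})"
    if "t \<in> {t0..}" for t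
    using that by (simp only: f_s_f_x_f_r_f_v_sum)
  then obtain C where "\<And>t. t \<in> {t0..} \<Longrightarrow> s t + x t + r t + v t = C"
    using has_vector_derivative_zero_constant[OF convex_real_interval(1)] by blast
  then show ?thesis
    using assms(5) by simp
qed

theorem lemma2:
  fixes A B Hmin DH :: "real ^ 'n ^ 'n"
    and \<gamma> \<omega> \<delta> :: "real ^ 'n"
    and o' s x r v :: "real \<Rightarrow> real ^ 'n"
    and t0 :: real
  assumes nonneg_A: "\<forall>i j. A $ i $ j \<ge> 0"
    and nonneg_B: "\<forall>i j. B $ i $ j \<ge> 0"
    and nonneg_Hmin: "\<forall>i j. Hmin $ i $ j \<ge> 0"
    and nonneg_DH: "\<forall>i j. DH $ i $ j \<ge> 0"
    and nonneg_gamma: "\<forall>i. \<gamma> $ i \<ge> 0"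
    and nonneg_omega: "\<forall>i. \<omega> $ i \<ge> 0"
    and nonneg_delta: "\<forall>i. \<delta> $ i \<ge> 0"
    and ode_o: "\<forall>t\<ge>t0. (o' has_vector_derivative f_o A (o' t) (x t)) (at t within {t0..})"
    and ode_s: "\<forall>t\<ge>t0. (s has_vector_derivative
                   f_s B \<delta> \<omega> Hmin DH (o' t) (s t) (x t) (r t) (v t)) (at t within {t0..})"
    and ode_x: "\<forall>t\<ge>t0. (x has_vector_derivative f_x B \<gamma> (s t) (x t)) (at t within {t0..})"
    and ode_r: "\<forall>t\<ge>t0. (r has_vector_derivative
                   f_r \<gamma> \<omega> Hmin DH (o' t) (x t) (r t) (v t)) (at t within {t0..})"
    and ode_v: "\<forall>t\<ge>t0. (v has_vector_derivative
                   f_v \<delta> Hmin DH (o' t) (s t) (r t) (v t)) (at t within {t0..})"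
    and init_box: "\<forall>i. 0 \<le> o' t0 $ i \<and> o' t0 $ i \<le> 1 \<and> 0 \<le> s t0 $ i \<and> s t0 $ i \<le> 1
                     \<and> 0 \<le> x t0 $ i \<and> x t0 $ i \<le> 1 \<and> 0 \<le> r t0 $ i \<and> r t0 $ i \<le> 1
                     \<and> 0 \<le> v t0 $ i \<and> v t0 $ i \<le> 1"
    and init_sum: "\<forall>i. s t0 $ i + x t0 $ i + r t0 $ i + v t0 $ i = 1"
    and init_o: "\<forall>i. o' t0 $ i \<in> {0..1}"
  shows "\<forall>i. \<forall>t>t0. o' t $ i \<in> {0..1}"
proof (intro allI impI)
  fix i :: 'n and T :: real
  assume "t0 < T"
  obtain c where "sirs_param_bound A B Hmin DH \<gamma> \<omega> \<delta> c"
    using sirs_param_bound_exists[OF nonneg_A nonneg_B nonneg_Hmin nonneg_DH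
        nonneg_gamma nonneg_omega nonneg_delta] ..
  then interpret sirs_param_bound A B Hmin DH \<gamma> \<omega> \<delta> c .
  have total: "s t $ j + x t $ j + r t $ j + v t $ j = 1" if "t0 \<le> t" for t j
    using arg_cong[OF sirv_total_conserved[OF ode_s ode_x ode_r ode_v that], of "\<lambda>w. w $ j"]
      init_sum by simp
  let ?g = "\<lambda>p t. slack (fst p) (snd p) (o' t) (s t) (x t) (r t) (v t)"
  let ?g' = "\<lambda>p t. slack_deriv (fst p) (snd p) (f_o A (o' t) (x t))
    (f_s B \<delta> \<omega> Hmin DH (o' t) (s t) (x t) (r t) (v t)) (f_x B \<gamma> (s t) (x t))
    (f_r \<gamma> \<omega> Hmin DH (o' t) (x t) (r t) (v t)) (f_v \<delta> Hmin DH (o' t) (s t) (r t) (v t))"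
  have "0 \<le> ?g (k, i) T" for k
  proof (rule nonneg_invariant_quasi_positive
      [where P = UNIV and K = "45 * c" and g = ?g and g' = ?g'])
    show "(?g p has_real_derivative ?g' p t) (at t within {t0..T})" if "t \<in> {t0..T}" for p t
      using that ode_o ode_s ode_x ode_r ode_v
      by (intro has_real_derivative_slack DERIV_subset[of _ _ _ "{t0..}"]) auto
    show "0 \<le> ?g p t0" for p
      using init_box by (cases "fst p") auto
    show "45 * c * ?g p t \<le> ?g' p t"
      if "t \<in> {t0<..T}" "- 1 \<le> ?g p t" "?g p t < 0" "\<forall>q\<in>UNIV. ?g p t \<le> ?g q t" for p t
      using that total by (intro slack_deriv_quasi_positive) auto
  qed (use \<open>t0 < T\<close> in auto)
  from this[of ONonneg] this[of OLeOne] show "o' T $ i \<in> {0..1}"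
    by simp
qed

end
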